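(* Let $V$ be a Yetter-Drinfeld module over $H=B(n,w,\gamma)$ and let $v\in V$ be a standard element of type $(\alpha,\beta,x^rg^i)$ with $\alpha,\beta\in\Bbbk^*$, $r,i\in\mathbb{Z}$. For $k\ge0$ let $V(v,k)$ be the linear span of $v,y\cdot v,\dots,y^k\cdot v$. Then for every $k\ge0$: (1) $x\cdot(y^k\cdot v)=\alpha(y^k\cdot v)$ and $g\cdot(y^k\cdot v)=\beta\gamma^{-k}(y^k\cdot v)$; (2) $V(v,k)$ is a subcomodule of $V$; (3) if $y^{k+1}\cdot v\in V(v,k)$, then $V(v,k)$ is a Yetter-Drinfeld submodule of $V$.
   Context: $\Bbbk$ is an algebraically closed field of characteristic $0$; $n,w$ positive integers, $\gamma$ a primitive $n$-th root of unity. $H=B(n,w,\gamma)$ is the Hopf algebra generated by $x^{\pm1},g,y$ with relations $xx^{-1}=x^{-1}x=1$, $xg=gx$, $xy=yx$, $yg=\gamma gy$, $y^n=1-x^w=1-g^n$, with $\Delta(x)=x\otimes x$, $\Delta(g)=g\otimes g$, $\Delta(y)=y\otimes g+1\otimes y$, $\varepsilon(x)=\varepsilon(g)=1$, $\varepsilon(y)=0$, $S(x)=x^{-1}$, $S(g)=g^{-1}$, $S(y)=-yg^{-1}$; $G(H)=\{g^jx^k\}$. A (left-left) Yetter-Drinfeld module is a left $H$-module, left $H$-comodule $(V,\cdot,\delta)$ with $\delta(h\cdot v)=h_{(1)}v_{(-1)}S(h_{(3)})\otimes h_{(2)}\cdot v_{(0)}$. A nonzero $v\in V$ is a standard element of type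 $(\alpha,\beta,h)$ if $h\in G(H)$, $\alpha,\beta\in\Bbbk^*$, $x\cdot v=\alpha v$, $g\cdot v=\beta v$, $\delta(v)=h\otimes v$. *)

theory Defs
  imports "HOL-Computational_Algebra.Polynomial"
begin

text \<open>H has the k-basis y^a g^b x^c with 0 <= a < n, 0 <= b < n, c in Z
  (recall g^n = x^w, y^n = 1 - x^w, yg = gamma gy).
  Elements of H are finitely supported functions bidx => k (coefficients in this basis),
  elements of H (x) H are functions on pairs of indices, and an element of H (x) V
  is written as the family of its V-valued coefficients.\<close>

type_synonym bidx = "nat \<times> nat \<times> int"

definition validx :: "nat \<Rightarrow> bidx \<Rightarrow> bool" where
  "validx n i \<longleftrightarrow> fst i < n \<and> fst (snd i) < n"

definition hsupp :: "('a \<Rightarrow> 'k::zero) \<Rightarrow> 'a set" where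
  "hsupp f = {t. f t \<noteq> 0}"

definition bas :: "bidx \<Rightarrow> bidx \<Rightarrow> 'k::field" where
  "bas i = (\<lambda>t. if t = i then 1 else 0)"

text \<open>The element y^A g^B x^C of H (A >= 0, B, C integers), written in the basis:
  y^A = y^(A mod n) (1 - x^w)^(A div n) and g^B = g^(B mod n) x^(w (B div n)).\<close>
definition mono :: "nat \<Rightarrow> nat \<Rightarrow> nat \<Rightarrow> int \<Rightarrow> int \<Rightarrow> bidx \<Rightarrow> 'k::field" where
  "mono n w A B C = (\<lambda>t. \<Sum>k\<le>A div n. (-1)^k * of_nat (A div n choose k) *
      bas (A mod n, nat (B mod int n), C + int w * (B div int n) + int w * int k) t)"

text \<open>Product of two basis elements: (y^a g^b x^c)(y^a' g^b' x^c') = gamma^(-b a') y^(a+a') g^(b+b') x^(c+c').\<close>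
definition bmul :: "nat \<Rightarrow> nat \<Rightarrow> 'k::field \<Rightarrow> bidx \<Rightarrow> bidx \<Rightarrow> bidx \<Rightarrow> 'k" where
  "bmul n w \<gamma> i j = (case i of (a, b, c) \<Rightarrow> case j of (a', b', c') \<Rightarrow>
      (\<lambda>t. (inverse \<gamma>) ^ (b * a') * mono n w (a + a') (int (b + b')) (c + c') t))"

definition hmul :: "nat \<Rightarrow> nat \<Rightarrow> 'k::field \<Rightarrow> (bidx \<Rightarrow> 'k) \<Rightarrow> (bidx \<Rightarrow> 'k) \<Rightarrow> bidx \<Rightarrow> 'k" where
  "hmul n w \<gamma> f h = (\<lambda>t. \<Sum>i\<in>hsupp f. \<Sum>j\<in>hsupp h. f i * h j * bmul n w \<gamma> i j t)"

definition hone :: "nat \<Rightarrow> nat \<Rightarrow> bidx \<Rightarrow> 'k::field" where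
  "hone n w = mono n w 0 0 0"

definition hpow :: "nat \<Rightarrow> nat \<Rightarrow> 'k::field \<Rightarrow> (bidx \<Rightarrow> 'k) \<Rightarrow> nat \<Rightarrow> bidx \<Rightarrow> 'k" where
  "hpow n w \<gamma> f k = (hmul n w \<gamma> f ^^ k) (hone n w)"

definition hx :: "nat \<Rightarrow> nat \<Rightarrow> bidx \<Rightarrow> 'k::field" where "hx n w = mono n w 0 0 1"
definition hg :: "nat \<Rightarrow> nat \<Rightarrow> bidx \<Rightarrow> 'k::field" where "hg n w = mono n w 0 1 0"
definition hy :: "nat \<Rightarrow> nat \<Rightarrow> bidx \<Rightarrow> 'k::field" where "hy n w = mono n w 1 0 0"

definition tens :: "(bidx \<Rightarrow> 'k::field) \<Rightarrow> (bidx \<Rightarrow> 'k) \<Rightarrow> bidx \<times> bidx \<Rightarrow> 'k" where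
  "tens f h = (\<lambda>(p, q). f p * h q)"

definition mul2 :: "nat \<Rightarrow> nat \<Rightarrow> 'k::field \<Rightarrow> (bidx \<times> bidx \<Rightarrow> 'k) \<Rightarrow> (bidx \<times> bidx \<Rightarrow> 'k)
    \<Rightarrow> bidx \<times> bidx \<Rightarrow> 'k" where
  "mul2 n w \<gamma> F G = (\<lambda>(t, u). \<Sum>P\<in>hsupp F. \<Sum>Q\<in>hsupp G.
      F P * G Q * bmul n w \<gamma> (fst P) (fst Q) t * bmul n w \<gamma> (snd P) (snd Q) u)"

definition pow2 :: "nat \<Rightarrow> nat \<Rightarrow> 'k::field \<Rightarrow> (bidx \<times> bidx \<Rightarrow> 'k) \<Rightarrow> nat \<Rightarrow> bidx \<times> bidx \<Rightarrow> 'k" where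
  "pow2 n w \<gamma> F k = (mul2 n w \<gamma> F ^^ k) (tens (hone n w) (hone n w))"

text \<open>Comultiplication on basis elements: Delta is the algebra map with
  Delta(y) = y (x) g + 1 (x) y and Delta(g^b x^c) = g^b x^c (x) g^b x^c.\<close>
definition cop :: "nat \<Rightarrow> nat \<Rightarrow> 'k::field \<Rightarrow> bidx \<Rightarrow> bidx \<times> bidx \<Rightarrow> 'k" where
  "cop n w \<gamma> i = (case i of (a, b, c) \<Rightarrow>
      mul2 n w \<gamma>
        (pow2 n w \<gamma> (\<lambda>P. tens (hy n w) (hg n w) P + tens (hone n w) (hy n w) P) a)
        (tens (mono n w 0 (int b) c) (mono n w 0 (int b) c)))"

text \<open>(Delta (x) id) Delta on basis elements.\<close>
definition cop2 :: "nat \<Rightarrow> nat \<Rightarrow> 'k::field \<Rightarrow> bidx \<Rightarrow> bidx \<times> bidx \<times> bidx \<Rightarrow> 'k" where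
  "cop2 n w \<gamma> l = (\<lambda>(p, q, r). \<Sum>P\<in>hsupp (cop n w \<gamma> l).
      if snd P = r then cop n w \<gamma> l P * cop n w \<gamma> (fst P) (p, q) else 0)"

definition eps :: "bidx \<Rightarrow> 'k::field" where
  "eps i = (if fst i = 0 then 1 else 0)"

text \<open>Antipode on basis elements: S(y^a g^b x^c) = S(g^b x^c) S(y)^a = g^(-b) x^(-c) (- y g^(-1))^a.\<close>
definition antip :: "nat \<Rightarrow> nat \<Rightarrow> 'k::field \<Rightarrow> bidx \<Rightarrow> bidx \<Rightarrow> 'k" where
  "antip n w \<gamma> i = (case i of (a, b, c) \<Rightarrow>
      hmul n w \<gamma> (mono n w 0 (- int b) (- c))
        (hpow n w \<gamma> (\<lambda>t. - hmul n w \<gamma> (hy n w) (mono n w 0 (-1) 0) t) a))"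

text \<open>A left H-module structure on the k-vector space (V, scale): rho i is the action of the
  basis element with index i. The action of an arbitrary element h of H is hact.\<close>
definition hact :: "('k::field \<Rightarrow> 'v::ab_group_add \<Rightarrow> 'v) \<Rightarrow> (bidx \<Rightarrow> 'v \<Rightarrow> 'v)
    \<Rightarrow> (bidx \<Rightarrow> 'k) \<Rightarrow> 'v \<Rightarrow> 'v" where
  "hact scale \<rho> h v = (\<Sum>t\<in>hsupp h. scale (h t) (\<rho> t v))"

definition hmodule :: "('k::field \<Rightarrow> 'v::ab_group_add \<Rightarrow> 'v) \<Rightarrow> nat \<Rightarrow> nat \<Rightarrow> 'k
    \<Rightarrow> (bidx \<Rightarrow> 'v \<Rightarrow> 'v) \<Rightarrow> bool" where
  "hmodule scale n w \<gamma> \<rho> \<longleftrightarrow>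
     (\<forall>i. validx n i \<longrightarrow> Vector_Spaces.linear scale scale (\<rho> i)) \<and>
     (\<forall>v. hact scale \<rho> (hone n w) v = v) \<and>
     (\<forall>i j v. validx n i \<longrightarrow> validx n j \<longrightarrow>
        \<rho> i (\<rho> j v) = hact scale \<rho> (bmul n w \<gamma> i j) v)"

text \<open>A left H-comodule structure: delta(v) = sum_i e_i (x) phi i v, e_i the basis elements.\<close>
definition hcomodule :: "('k::field \<Rightarrow> 'v::ab_group_add \<Rightarrow> 'v) \<Rightarrow> nat \<Rightarrow> nat \<Rightarrow> 'k
    \<Rightarrow> (bidx \<Rightarrow> 'v \<Rightarrow> 'v) \<Rightarrow> bool" where
  "hcomodule scale n w \<gamma> \<phi> \<longleftrightarrow>
     (\<forall>i. Vector_Spaces.linear scale scale (\<phi> i)) \<and>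
     (\<forall>i v. \<not> validx n i \<longrightarrow> \<phi> i v = 0) \<and>
     (\<forall>v. finite {i. \<phi> i v \<noteq> 0}) \<and>
     (\<forall>v. (\<Sum>i\<in>{i. \<phi> i v \<noteq> 0}. scale (eps i) (\<phi> i v)) = v) \<and>
     (\<forall>v p q. (\<Sum>i\<in>{i. \<phi> i v \<noteq> 0}. scale (cop n w \<gamma> i (p, q)) (\<phi> i v)) = \<phi> q (\<phi> p v))"

text \<open>Left-left Yetter-Drinfeld compatibility
  delta(h.v) = h1 v(-1) S(h3) (x) h2.v(0), for h running through the basis of H
  (both sides are linear in h).\<close>
definition yd_module :: "('k::field \<Rightarrow> 'v::ab_group_add \<Rightarrow> 'v) \<Rightarrow> nat \<Rightarrow> nat \<Rightarrow> 'k
    \<Rightarrow> (bidx \<Rightarrow> 'v \<Rightarrow> 'v) \<Rightarrow> (bidx \<Rightarrow> 'v \<Rightarrow> 'v) \<Rightarrow> bool" where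
  "yd_module scale n w \<gamma> \<rho> \<phi> \<longleftrightarrow>
     hmodule scale n w \<gamma> \<rho> \<and> hcomodule scale n w \<gamma> \<phi> \<and>
     (\<forall>l v t. validx n l \<longrightarrow>
        \<phi> t (\<rho> l v) =
          (\<Sum>(p, q, r)\<in>hsupp (cop2 n w \<gamma> l). \<Sum>s\<in>{s. \<phi> s v \<noteq> 0}.
             scale (cop2 n w \<gamma> l (p, q, r) *
                    hmul n w \<gamma> (bmul n w \<gamma> p s) (antip n w \<gamma> r) t)
                   (\<rho> q (\<phi> s v))))"

definition subcomodule :: "('k::field \<Rightarrow> 'v::ab_group_add \<Rightarrow> 'v) \<Rightarrow> (bidx \<Rightarrow> 'v \<Rightarrow> 'v)
    \<Rightarrow> 'v set \<Rightarrow> bool" where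
  "subcomodule scale \<phi> W \<longleftrightarrow> module.subspace scale W \<and> (\<forall>i. \<forall>u\<in>W. \<phi> i u \<in> W)"

definition yd_submodule :: "('k::field \<Rightarrow> 'v::ab_group_add \<Rightarrow> 'v) \<Rightarrow> nat
    \<Rightarrow> (bidx \<Rightarrow> 'v \<Rightarrow> 'v) \<Rightarrow> (bidx \<Rightarrow> 'v \<Rightarrow> 'v) \<Rightarrow> 'v set \<Rightarrow> bool" where
  "yd_submodule scale n \<rho> \<phi> W \<longleftrightarrow>
     subcomodule scale \<phi> W \<and> (\<forall>i. validx n i \<longrightarrow> (\<forall>u\<in>W. \<rho> i u \<in> W))"

definition standard_element :: "('k::field \<Rightarrow> 'v::ab_group_add \<Rightarrow> 'v) \<Rightarrow> nat \<Rightarrow> nat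
    \<Rightarrow> (bidx \<Rightarrow> 'v \<Rightarrow> 'v) \<Rightarrow> (bidx \<Rightarrow> 'v \<Rightarrow> 'v) \<Rightarrow> 'v \<Rightarrow> 'k \<Rightarrow> 'k \<Rightarrow> int \<Rightarrow> int \<Rightarrow> bool" where
  "standard_element scale n w \<rho> \<phi> v \<alpha> \<beta> r i \<longleftrightarrow>
     v \<noteq> 0 \<and> \<alpha> \<noteq> 0 \<and> \<beta> \<noteq> 0 \<and>
     hact scale \<rho> (hx n w) v = scale \<alpha> v \<and>
     hact scale \<rho> (hg n w) v = scale \<beta> v \<and>
     (\<forall>j. \<phi> j v = scale (mono n w 0 i r j) v)"

end

theory Submission
  imports Defs
begin

(* Since x is central and y g = gamma g y in H, the vector y^m.v is an eigenvector of x and g with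
   eigenvalues alpha and beta gamma^-m, so every basis element y^a g^b x^c of H maps y^m.v to a
   multiple of y^(m+a).v. On the comodule side, Delta does not raise the total y-degree; hence in the
   Yetter-Drinfeld condition delta(h.u) = h1 u(-1) S(h3) (x) h2.u(0) only elements h2 of y-degree at
   most that of h act on the coefficients of delta(u). By induction on m all coefficients of
   delta(y^m.v) lie in V(v,m). Finally, if y^(k+1).v lies in V(v,k), this space contains every y^m.v
   and is therefore stable under H. *)

definition helem :: "nat \<Rightarrow> (bidx \<Rightarrow> 'k::zero) \<Rightarrow> bool" where
  "helem n f \<longleftrightarrow> finite (hsupp f) \<and> (\<forall>t\<in>hsupp f. validx n t)"

lemma hsupp_bas [simp]: "hsupp (bas i :: bidx \<Rightarrow> 'k::field) = {i}"
  by (auto simp: hsupp_def bas_def)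

lemma helem_bas: "validx n i \<Longrightarrow> helem n (bas i :: bidx \<Rightarrow> 'k::field)"
  by (simp add: helem_def)

lemma mono_nonzeroD:
  assumes "mono n w A B C t \<noteq> (0::'k::field)"
  shows "\<exists>k\<le>A div n. t = (A mod n, nat (B mod int n), C + int w * (B div int n) + int w * int k)"
proof -
  from assms obtain k where "k \<in> {..A div n}" "(-1) ^ k * of_nat (A div n choose k) *
      bas (A mod n, nat (B mod int n), C + int w * (B div int n) + int w * int k) t \<noteq> (0::'k)"
    unfolding mono_def by (rule sum.not_neutral_contains_not_neutral)
  then show ?thesis by (auto simp: bas_def split: if_splits)
qed

lemma mono_nonzero_fst:
  "mono n w A B C t \<noteq> (0::'k::field) \<Longrightarrow> fst t = A mod n"
  by (drule mono_nonzeroD) force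

lemma mono_nonzero_validx:
  "n > 0 \<Longrightarrow> mono n w A B C t \<noteq> (0::'k::field) \<Longrightarrow> validx n t"
  by (drule mono_nonzeroD) (force simp: validx_def nat_less_iff)

lemma finite_hsupp_mono: "finite (hsupp (mono n w A B C :: bidx \<Rightarrow> 'k::field))"
proof (rule finite_subset)
  show "hsupp (mono n w A B C :: bidx \<Rightarrow> 'k) \<subseteq>
      (\<lambda>k. (A mod n, nat (B mod int n), C + int w * (B div int n) + int w * int k)) ` {..A div n}"
    by (auto simp: hsupp_def dest!: mono_nonzeroD)
qed simp

lemma helem_mono: "n > 0 \<Longrightarrow> helem n (mono n w A B C :: bidx \<Rightarrow> 'k::field)"
  by (simp add: helem_def finite_hsupp_mono) (simp add: hsupp_def mono_nonzero_validx)

lemma mono_eq_bas: "A < n \<Longrightarrow> 0 \<le> B \<Longrightarrow> B < int n \<Longrightarrow> mono n w A B C = bas (A, nat B, C)"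
  by (simp add: mono_def)

lemma mono_0_eq_bas: "mono n w 0 B C = bas (0, nat (B mod int n), C + int w * (B div int n))"
  by (simp add: mono_def)

lemma hone_eq_bas: "hone n w = bas (0, 0, 0)"
  by (simp add: hone_def mono_0_eq_bas)

lemma hx_eq_bas: "hx n w = bas (0, 0, 1)"
  by (simp add: hx_def mono_0_eq_bas)

lemma hg_eq_bas: "n \<ge> 2 \<Longrightarrow> hg n w = bas (0, 1, 0)"
  by (simp add: hg_def mono_eq_bas)

lemma hy_eq_bas: "n \<ge> 2 \<Longrightarrow> hy n w = bas (1, 0, 0)"
  by (simp add: hy_def mono_eq_bas)

lemma hg_eq_bas_mod: "hg n w = bas (0, nat (1 mod int n), int w * (1 div int n))"
  by (simp add: hg_def mono_0_eq_bas)

lemma hsupp_hy: "t \<in> hsupp (hy n w :: bidx \<Rightarrow> 'k::field) \<Longrightarrow> fst t = 1 mod n \<and> fst (snd t) = 0"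
  by (auto simp: hsupp_def hy_def dest: mono_nonzeroD)

lemma bmul_Pair: "bmul n w \<gamma> (a, b, c) (a', b', c') =
    (\<lambda>t. inverse \<gamma> ^ (b * a') * mono n w (a + a') (int (b + b')) (c + c') t)"
  by (simp add: bmul_def)

lemma bmul_eq_bas:
  assumes "a + a' < n" "b + b' < n" "b * a' = 0"
  shows "bmul n w \<gamma> (a, b, c) (a', b', c') = bas (a + a', b + b', c + c')"
proof -
  have "mono n w (a + a') (int (b + b')) (c + c') = bas (a + a', nat (int (b + b')), c + c')"
    using assms(1,2) by (intro mono_eq_bas) simp_all
  then show ?thesis
    unfolding bmul_Pair assms(3) nat_int by simp
qed

lemma bmul_nonzero:
  assumes "n > 0" "bmul n w \<gamma> i j t \<noteq> (0::'k::field)"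
  shows "validx n t \<and> fst t \<le> fst i + fst j"
proof -
  obtain a b c a' b' c' where ij: "i = (a, b, c)" "j = (a', b', c')" by (cases i, cases j)
  with assms(2) have "mono n w (a + a') (int (b + b')) (c + c') t \<noteq> (0::'k)"
    by (simp add: bmul_Pair)
  from mono_nonzero_validx[OF assms(1) this] mono_nonzero_fst[OF this] show ?thesis
    by (simp add: ij)
qed

lemma finite_hsupp_bmul: "finite (hsupp (bmul n w \<gamma> i j :: bidx \<Rightarrow> 'k::field))"
proof -
  obtain a b c a' b' c' where ij: "i = (a, b, c)" "j = (a', b', c')" by (cases i, cases j)
  have "hsupp (bmul n w \<gamma> i j :: bidx \<Rightarrow> 'k) \<subseteq> hsupp (mono n w (a + a') (int (b + b')) (c + c') :: bidx \<Rightarrow> 'k)"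
    by (auto simp: ij bmul_Pair hsupp_def)
  moreover have "finite (hsupp (mono n w (a + a') (int (b + b')) (c + c') :: bidx \<Rightarrow> 'k))"
    by (rule finite_hsupp_mono)
  ultimately show ?thesis by (rule finite_subset)
qed

lemma hsupp_hmul_subset:
  "hsupp (hmul n w \<gamma> f h) \<subseteq> (\<Union>i\<in>hsupp f. \<Union>j\<in>hsupp h. hsupp (bmul n w \<gamma> i j :: bidx \<Rightarrow> 'k::field))"
proof
  fix t assume "t \<in> hsupp (hmul n w \<gamma> f h)"
  then have "(\<Sum>i\<in>hsupp f. \<Sum>j\<in>hsupp h. f i * h j * bmul n w \<gamma> i j t) \<noteq> 0"
    by (simp add: hsupp_def hmul_def)
  then obtain i where i: "i \<in> hsupp f" "(\<Sum>j\<in>hsupp h. f i * h j * bmul n w \<gamma> i j t) \<noteq> 0"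
    by (rule sum.not_neutral_contains_not_neutral)
  from i(2) obtain j where j: "j \<in> hsupp h" "f i * h j * bmul n w \<gamma> i j t \<noteq> 0"
    by (rule sum.not_neutral_contains_not_neutral)
  from j(2) have "t \<in> hsupp (bmul n w \<gamma> i j)"
    by (simp add: hsupp_def)
  with i(1) j(1) show "t \<in> (\<Union>i\<in>hsupp f. \<Union>j\<in>hsupp h. hsupp (bmul n w \<gamma> i j))"
    by blast
qed

lemma helem_hmul:
  assumes "n > 0" "helem n f" "helem n h"
  shows "helem n (hmul n w \<gamma> f h :: bidx \<Rightarrow> 'k::field)"
  unfolding helem_def
proof
  show "finite (hsupp (hmul n w \<gamma> f h))"
    using assms(2,3) unfolding helem_def
    by (intro finite_subset[OF hsupp_hmul_subset] finite_UN_I) (simp_all add: finite_hsupp_bmul)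
  show "\<forall>t\<in>hsupp (hmul n w \<gamma> f h). validx n t"
  proof
    fix t assume "t \<in> hsupp (hmul n w \<gamma> f h)"
    with hsupp_hmul_subset obtain i j where "t \<in> hsupp (bmul n w \<gamma> i j :: bidx \<Rightarrow> 'k)"
      by blast
    then show "validx n t" using bmul_nonzero[OF assms(1), of w \<gamma> i j t] by (simp add: hsupp_def)
  qed
qed

lemma hpow_0: "hpow n w \<gamma> f 0 = hone n w"
  by (simp add: hpow_def)

lemma hpow_Suc: "hpow n w \<gamma> f (Suc k) = hmul n w \<gamma> f (hpow n w \<gamma> f k)"
  by (simp add: hpow_def)

lemma helem_hpow:
  assumes "n > 0" "helem n f"
  shows "helem n (hpow n w \<gamma> f k :: bidx \<Rightarrow> 'k::field)"
proof (induction k)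
  case 0
  show ?case using assms(1) by (simp add: hpow_0 hone_eq_bas helem_bas validx_def)
next
  case (Suc k)
  then show ?case by (simp add: hpow_Suc helem_hmul assms)
qed

section \<open>The coproduct does not raise the y-degree\<close>

definition ydeg_le :: "nat \<Rightarrow> (bidx \<times> bidx \<Rightarrow> 'k::zero) \<Rightarrow> bool" where
  "ydeg_le d F \<longleftrightarrow> (\<forall>P. F P \<noteq> 0 \<longrightarrow> fst (fst P) + fst (snd P) \<le> d)"

lemma mul2_nonzeroD:
  assumes "mul2 n w \<gamma> F G (t, u) \<noteq> (0::'k::field)"
  obtains P Q where "P \<in> hsupp F" "Q \<in> hsupp G"
    "bmul n w \<gamma> (fst P) (fst Q) t \<noteq> 0" "bmul n w \<gamma> (snd P) (snd Q) u \<noteq> 0"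
proof -
  from assms have "(\<Sum>P\<in>hsupp F. \<Sum>Q\<in>hsupp G.
      F P * G Q * bmul n w \<gamma> (fst P) (fst Q) t * bmul n w \<gamma> (snd P) (snd Q) u) \<noteq> 0"
    by (simp add: mul2_def)
  then obtain P where P: "P \<in> hsupp F" "(\<Sum>Q\<in>hsupp G.
      F P * G Q * bmul n w \<gamma> (fst P) (fst Q) t * bmul n w \<gamma> (snd P) (snd Q) u) \<noteq> 0"
    by (rule sum.not_neutral_contains_not_neutral)
  from P(2) obtain Q where Q: "Q \<in> hsupp G"
      "F P * G Q * bmul n w \<gamma> (fst P) (fst Q) t * bmul n w \<gamma> (snd P) (snd Q) u \<noteq> 0"
    by (rule sum.not_neutral_contains_not_neutral)
  from Q(2) have "bmul n w \<gamma> (fst P) (fst Q) t \<noteq> 0" "bmul n w \<gamma> (snd P) (snd Q) u \<noteq> 0"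
    by simp_all
  with P(1) Q(1) show ?thesis by (rule that)
qed

lemma ydeg_le_mul2:
  assumes "n > 0" "ydeg_le d1 F" "ydeg_le d2 (G :: bidx \<times> bidx \<Rightarrow> 'k::field)"
  shows "ydeg_le (d1 + d2) (mul2 n w \<gamma> F G)"
  unfolding ydeg_le_def
proof (intro allI impI)
  fix x assume "mul2 n w \<gamma> F G x \<noteq> 0"
  moreover obtain t u where x: "x = (t, u)" by (cases x)
  ultimately have "mul2 n w \<gamma> F G (t, u) \<noteq> 0" by simp
  then obtain P Q where PQ: "P \<in> hsupp F" "Q \<in> hsupp G"
    "bmul n w \<gamma> (fst P) (fst Q) t \<noteq> 0" "bmul n w \<gamma> (snd P) (snd Q) u \<noteq> (0::'k)"
    by (rule mul2_nonzeroD)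
  have "fst t \<le> fst (fst P) + fst (fst Q)" "fst u \<le> fst (snd P) + fst (snd Q)"
    using bmul_nonzero[OF assms(1) PQ(3)] bmul_nonzero[OF assms(1) PQ(4)] by auto
  moreover have "fst (fst P) + fst (snd P) \<le> d1" "fst (fst Q) + fst (snd Q) \<le> d2"
    using assms(2,3) PQ(1,2) unfolding ydeg_le_def hsupp_def by blast+
  ultimately show "fst (fst x) + fst (snd x) \<le> d1 + d2" by (simp add: x)
qed

lemma ydeg_le_pow2:
  assumes "n > 0" "ydeg_le 1 (F :: bidx \<times> bidx \<Rightarrow> 'k::field)"
  shows "ydeg_le a (pow2 n w \<gamma> F a)"
proof (induction a)
  case 0
  show ?case by (simp add: ydeg_le_def pow2_def tens_def hone_eq_bas bas_def)
next
  case (Suc a)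
  from ydeg_le_mul2[OF assms Suc] show ?case by (simp add: pow2_def)
qed

lemma ydeg_le_Delta_y:
  "ydeg_le 1 (\<lambda>P. tens (hy n w) (hg n w) P + tens (hone n w) (hy n w) P :: 'k::field)"
  unfolding ydeg_le_def
proof (intro allI impI)
  fix P :: "bidx \<times> bidx"
  obtain p q where P: "P = (p, q)" by (cases P)
  have hg: "fst q = 0" if "hg n w q \<noteq> (0::'k)"
    using mono_nonzero_fst[OF that[unfolded hg_def]] by simp
  have hy: "fst t \<le> 1" if "hy n w t \<noteq> (0::'k)" for t
    using mono_nonzero_fst[OF that[unfolded hy_def]] by simp
  have hone: "fst p = 0" if "hone n w p \<noteq> (0::'k)"
    using that by (simp add: hone_eq_bas bas_def split: if_splits)
  assume "tens (hy n w) (hg n w) P + tens (hone n w) (hy n w) P \<noteq> (0::'k)"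
  then consider "hy n w p \<noteq> (0::'k)" "hg n w q \<noteq> (0::'k)" | "hone n w p \<noteq> (0::'k)" "hy n w q \<noteq> (0::'k)"
    by (fastforce simp: P tens_def)
  then show "fst (fst P) + fst (snd P) \<le> 1"
    unfolding P fst_conv snd_conv
    by cases (use hg hy hone in fastforce)+
qed

lemma ydeg_le_tens_grouplike: "ydeg_le 0 (tens (mono n w 0 B C) (mono n w 0 B C) :: bidx \<times> bidx \<Rightarrow> 'k::field)"
  by (simp add: ydeg_le_def tens_def mono_0_eq_bas bas_def)

lemma cop_nonzero:
  assumes "n > 0" "cop n w \<gamma> i (p, q) \<noteq> (0::'k::field)"
  shows "validx n q \<and> fst p + fst q \<le> fst i"
proof -
  obtain a b c where i: "i = (a, b, c)" by (cases i)
  let ?F = "\<lambda>P. tens (hy n w) (hg n w) P + tens (hone n w) (hy n w) P :: 'k"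
  have cop_eq: "cop n w \<gamma> i =
      mul2 n w \<gamma> (pow2 n w \<gamma> ?F a) (tens (mono n w 0 (int b) c) (mono n w 0 (int b) c))"
    by (simp add: cop_def i)
  have "ydeg_le (a + 0) (cop n w \<gamma> i)"
    unfolding cop_eq
    by (intro ydeg_le_mul2 ydeg_le_pow2 ydeg_le_Delta_y ydeg_le_tens_grouplike assms(1))
  with assms(2) have "fst p + fst q \<le> fst i"
    unfolding ydeg_le_def i by fastforce
  moreover from assms(2) obtain P Q :: "bidx \<times> bidx" where "bmul n w \<gamma> (snd P) (snd Q) q \<noteq> (0::'k)"
    unfolding cop_eq by (rule mul2_nonzeroD) blast
  then have "validx n q" using bmul_nonzero[OF assms(1)] by blast
  ultimately show ?thesis by simp
qed

lemma cop2_nonzero: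
  assumes "n > 0" "cop2 n w \<gamma> l (p, q, r) \<noteq> (0::'k::field)"
  shows "validx n q \<and> fst q \<le> fst l"
proof -
  from assms(2) have "(\<Sum>P\<in>hsupp (cop n w \<gamma> l).
      if snd P = r then cop n w \<gamma> l P * cop n w \<gamma> (fst P) (p, q) else 0) \<noteq> (0::'k)"
    by (simp add: cop2_def)
  then obtain P where
    "(if snd P = r then cop n w \<gamma> l P * cop n w \<gamma> (fst P) (p, q) else 0) \<noteq> (0::'k)"
    by (rule sum.not_neutral_contains_not_neutral)
  then have "cop n w \<gamma> l (fst P, snd P) \<noteq> (0::'k)" "cop n w \<gamma> (fst P) (p, q) \<noteq> 0"
    by (simp_all split: if_splits)
  with cop_nonzero[OF assms(1) this(1)] cop_nonzero[OF assms(1) this(2)]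
  show ?thesis by auto
qed

section \<open>Yetter-Drinfeld modules over H\<close>

locale yetter_drinfeld = vector_space scale
  for scale :: "'k::field \<Rightarrow> 'v::ab_group_add \<Rightarrow> 'v" +
  fixes n w :: nat and \<gamma> :: 'k and \<rho> \<phi> :: "bidx \<Rightarrow> 'v \<Rightarrow> 'v"
  assumes n_pos: "n > 0" and gamma_pow_n: "\<gamma> ^ n = 1" and yd: "yd_module scale n w \<gamma> \<rho> \<phi>"
begin

sublocale lin: vector_space_pair scale scale ..

lemma gamma_nonzero: "\<gamma> \<noteq> 0"
  using gamma_pow_n n_pos by (metis power_0_left zero_neq_one less_not_refl)

lemma rho_linear: "validx n i \<Longrightarrow> Vector_Spaces.linear scale scale (\<rho> i)"
  using yd unfolding yd_module_def hmodule_def by blast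

lemma phi_linear: "Vector_Spaces.linear scale scale (\<phi> i)"
  using yd unfolding yd_module_def hcomodule_def by blast

lemma hact_hone: "hact scale \<rho> (hone n w) u = u"
  using yd unfolding yd_module_def hmodule_def by blast

lemma rho_rho: "validx n i \<Longrightarrow> validx n j \<Longrightarrow> \<rho> i (\<rho> j u) = hact scale \<rho> (bmul n w \<gamma> i j) u"
  using yd unfolding yd_module_def hmodule_def by blast

lemma helem_hx: "helem n (hx n w :: bidx \<Rightarrow> 'k)"
  and helem_hg: "helem n (hg n w :: bidx \<Rightarrow> 'k)"
  and helem_hy: "helem n (hy n w :: bidx \<Rightarrow> 'k)"
  using helem_mono[OF n_pos] by (simp_all add: hx_def hg_def hy_def)

lemma hact_bas: "hact scale \<rho> (bas i) u = \<rho> i u"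
  unfolding hact_def hsupp_bas by (simp add: bas_def)

lemma rho_unit: "\<rho> (0, 0, 0) u = u"
  using hact_hone[of u] by (simp add: hone_eq_bas hact_bas)

lemma rho_rho_bas:
  "validx n p \<Longrightarrow> validx n q \<Longrightarrow> bmul n w \<gamma> p q = bas t \<Longrightarrow> \<rho> p (\<rho> q u) = \<rho> t u"
  by (simp add: rho_rho hact_bas)

lemma hact_cmult: "hact scale \<rho> (\<lambda>t. c * f t) u = scale c (hact scale \<rho> f u)"
proof (cases "c = 0")
  case False
  then have "hsupp (\<lambda>t. c * f t) = hsupp f" by (auto simp: hsupp_def)
  then show ?thesis by (simp add: hact_def scale_sum_right)
qed (simp add: hact_def hsupp_def)

lemma hact_superset:
  "finite T \<Longrightarrow> hsupp h \<subseteq> T \<Longrightarrow> hact scale \<rho> h u = (\<Sum>t\<in>T. scale (h t) (\<rho> t u))"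
  unfolding hact_def by (rule sum.mono_neutral_left) (auto simp: hsupp_def)

lemma hact_lincomb:
  assumes "finite K" "\<And>k. k \<in> K \<Longrightarrow> finite (hsupp (g k))"
  shows "hact scale \<rho> (\<lambda>t. \<Sum>k\<in>K. c k * g k t) u = (\<Sum>k\<in>K. scale (c k) (hact scale \<rho> (g k) u))"
proof -
  define T where "T = (\<Union>k\<in>K. hsupp (g k))"
  have "finite T" using assms by (simp add: T_def)
  have "hsupp (\<lambda>t. \<Sum>k\<in>K. c k * g k t) \<subseteq> T"
  proof
    fix t assume "t \<in> hsupp (\<lambda>t. \<Sum>k\<in>K. c k * g k t)"
    then obtain k where "k \<in> K" "c k * g k t \<noteq> 0"
      unfolding hsupp_def mem_Collect_eq by (rule sum.not_neutral_contains_not_neutral)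
    then show "t \<in> T" by (auto simp: T_def hsupp_def)
  qed
  with \<open>finite T\<close> have "hact scale \<rho> (\<lambda>t. \<Sum>k\<in>K. c k * g k t) u
      = (\<Sum>t\<in>T. \<Sum>k\<in>K. scale (c k) (scale (g k t) (\<rho> t u)))"
    by (simp add: hact_superset scale_sum_left)
  also have "\<dots> = (\<Sum>k\<in>K. scale (c k) (\<Sum>t\<in>T. scale (g k t) (\<rho> t u)))"
    by (simp add: sum.swap[of _ T] scale_sum_right)
  also have "\<dots> = (\<Sum>k\<in>K. scale (c k) (hact scale \<rho> (g k) u))"
  proof (intro sum.cong refl)
    fix k assume "k \<in> K"
    then have "hsupp (g k) \<subseteq> T" by (auto simp: T_def)
    with \<open>finite T\<close> show "scale (c k) (\<Sum>t\<in>T. scale (g k t) (\<rho> t u)) =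
        scale (c k) (hact scale \<rho> (g k) u)"
      by (simp add: hact_superset)
  qed
  finally show ?thesis .
qed

lemma hact_hact:
  assumes "helem n f"
  shows "hact scale \<rho> f (hact scale \<rho> h u) =
     (\<Sum>i\<in>hsupp f. \<Sum>j\<in>hsupp h. scale (f i * h j) (\<rho> i (\<rho> j u)))"
  unfolding hact_def
proof (rule sum.cong[OF refl])
  fix i assume "i \<in> hsupp f"
  with assms have "Vector_Spaces.linear scale scale (\<rho> i)" by (simp add: helem_def rho_linear)
  then show "scale (f i) (\<rho> i (\<Sum>j\<in>hsupp h. scale (h j) (\<rho> j u))) =
      (\<Sum>j\<in>hsupp h. scale (f i * h j) (\<rho> i (\<rho> j u)))"
    by (simp add: lin.linear_sum lin.linear_scale scale_sum_right)
qed

lemma hact_hmul: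
  assumes "helem n f" "helem n h"
  shows "hact scale \<rho> (hmul n w \<gamma> f h) u = hact scale \<rho> f (hact scale \<rho> h u)"
proof -
  let ?K = "hsupp f \<times> hsupp h"
  have "hmul n w \<gamma> f h = (\<lambda>t. \<Sum>p\<in>?K. (f (fst p) * h (snd p)) * bmul n w \<gamma> (fst p) (snd p) t)"
    by (simp add: hmul_def sum.cartesian_product split_def)
  then have "hact scale \<rho> (hmul n w \<gamma> f h) u =
      (\<Sum>p\<in>?K. scale (f (fst p) * h (snd p)) (hact scale \<rho> (bmul n w \<gamma> (fst p) (snd p)) u))"
    using assms by (simp add: hact_lincomb helem_def finite_hsupp_bmul)
  also have "\<dots> = (\<Sum>p\<in>?K. scale (f (fst p) * h (snd p)) (\<rho> (fst p) (\<rho> (snd p) u)))"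
    using assms by (intro sum.cong refl) (auto simp: helem_def rho_rho)
  also have "\<dots> = hact scale \<rho> f (hact scale \<rho> h u)"
    using assms by (simp add: hact_hact sum.cartesian_product split_def)
  finally show ?thesis .
qed

lemma hact_linear:
  assumes "helem n h"
  shows "Vector_Spaces.linear scale scale (hact scale \<rho> h)"
proof -
  have "hact scale \<rho> h = (\<lambda>u. \<Sum>t\<in>hsupp h. scale (h t) (\<rho> t u))"
    by (simp add: fun_eq_iff hact_def)
  with assms show ?thesis
    by (auto simp: helem_def intro!: lin.linear_compose_sum lin.linear_compose_scale_right rho_linear)
qed

lemma hact_hpow_hpow:
  assumes "helem n f"
  shows "hact scale \<rho> (hpow n w \<gamma> f a) (hact scale \<rho> (hpow n w \<gamma> f m) u) =
    hact scale \<rho> (hpow n w \<gamma> f (a + m)) u"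
proof (induction a)
  case 0
  show ?case by (simp add: hpow_0 hact_hone)
next
  case (Suc a)
  have "helem n (hpow n w \<gamma> f k)" for k by (rule helem_hpow[OF n_pos assms])
  with Suc assms show ?case by (simp add: hpow_Suc hact_hmul)
qed

lemma rho_commute:
  assumes "validx n (a, b, c)" "validx n (a', b', c')"
  shows "\<rho> (a, b, c) (\<rho> (a', b', c') u) =
     scale (inverse \<gamma> ^ (b * a') * \<gamma> ^ (b' * a)) (\<rho> (a', b', c') (\<rho> (a, b, c) u))"
proof -
  let ?M = "mono n w (a + a') (int (b + b')) (c + c')"
  have "\<rho> (a, b, c) (\<rho> (a', b', c') u) = scale (inverse \<gamma> ^ (b * a')) (hact scale \<rho> ?M u)"
    using rho_rho[OF assms] by (simp add: bmul_Pair hact_cmult)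
  moreover have "\<rho> (a', b', c') (\<rho> (a, b, c) u) = scale (inverse \<gamma> ^ (b' * a)) (hact scale \<rho> ?M u)"
    using rho_rho[OF assms(2,1)] by (simp add: bmul_Pair hact_cmult ac_simps)
  moreover have "\<gamma> ^ (b' * a) * inverse \<gamma> ^ (b' * a) = 1"
    using gamma_nonzero by (simp add: power_inverse[symmetric] field_simps)
  ultimately show ?thesis by (simp add: mult.assoc)
qed

lemma hact_commute:
  assumes "helem n f" "helem n h"
    and "\<And>i j u. i \<in> hsupp f \<Longrightarrow> j \<in> hsupp h \<Longrightarrow> \<rho> i (\<rho> j u) = scale \<kappa> (\<rho> j (\<rho> i u))"
  shows "hact scale \<rho> f (hact scale \<rho> h u) = scale \<kappa> (hact scale \<rho> h (hact scale \<rho> f u))"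
proof -
  have "hact scale \<rho> f (hact scale \<rho> h u) =
      (\<Sum>i\<in>hsupp f. \<Sum>j\<in>hsupp h. scale \<kappa> (scale (h j * f i) (\<rho> j (\<rho> i u))))"
    by (simp add: hact_hact[OF assms(1)] assms(3) mult.commute)
  also have "\<dots> = scale \<kappa> (hact scale \<rho> h (hact scale \<rho> f u))"
    by (simp add: hact_hact[OF assms(2)] scale_sum_right sum.swap[of _ "hsupp f"])
  finally show ?thesis .
qed

lemma linear_image_span_subset:
  "Vector_Spaces.linear scale scale f \<Longrightarrow> f ` S \<subseteq> span T \<Longrightarrow> x \<in> span S \<Longrightarrow> f x \<in> span T"
  by (metis image_eqI lin.linear_span_image span_minimal subspace_span subsetD)

text \<open>Only elements \<open>h\<^sub>2\<close> of y-degree at most that of \<open>l\<close> occur in the Yetter-Drinfeld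
  condition for \<open>\<delta>(l.u)\<close>, by the degree bound on the coproduct.\<close>

lemma phi_rho_in_span:
  assumes "validx n l"
  shows "\<phi> t (\<rho> l u) \<in> span {\<rho> q (\<phi> s u) | q s. validx n q \<and> fst q \<le> fst l}"
proof -
  have "\<phi> t (\<rho> l u) = (\<Sum>(p, q, r)\<in>hsupp (cop2 n w \<gamma> l). \<Sum>s\<in>{s. \<phi> s u \<noteq> 0}.
      scale (cop2 n w \<gamma> l (p, q, r) * hmul n w \<gamma> (bmul n w \<gamma> p s) (antip n w \<gamma> r) t)
        (\<rho> q (\<phi> s u)))"
    using yd assms unfolding yd_module_def by blast
  also have "\<dots> \<in> span {\<rho> q (\<phi> s u) | q s. validx n q \<and> fst q \<le> fst l}" (is "_ \<in> ?S")
  proof (rule span_sum)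
    fix x assume x: "x \<in> hsupp (cop2 n w \<gamma> l)"
    obtain p q r where x_eq: "x = (p, q, r)" by (cases x)
    with x have "validx n q \<and> fst q \<le> fst l"
      using cop2_nonzero[OF n_pos] by (simp add: hsupp_def)
    then have "\<rho> q (\<phi> s u) \<in> ?S" for s
      by (intro span_base) blast
    then show "(case x of (p, q, r) \<Rightarrow> \<Sum>s\<in>{s. \<phi> s u \<noteq> 0}.
        scale (cop2 n w \<gamma> l (p, q, r) * hmul n w \<gamma> (bmul n w \<gamma> p s) (antip n w \<gamma> r) t)
          (\<rho> q (\<phi> s u))) \<in> ?S"
      by (simp add: x_eq span_sum span_scale)
  qed
  finally show ?thesis .
qed

lemma rho_x_power:
  assumes "hact scale \<rho> (hx n w) u = scale a u" "a \<noteq> 0"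
  shows "\<rho> (0, 0, c) u = scale (a powi c) u"
proof -
  have valid: "validx n (0, 0, d)" for d
    using n_pos by (simp add: validx_def)
  have shift: "\<rho> (0, 0, d) (\<rho> (0, 0, e) u) = \<rho> (0, 0, d + e) u" for d e
    by (rule rho_rho_bas[OF valid valid]) (simp add: bmul_eq_bas n_pos)
  have x: "\<rho> (0, 0, 1) u = scale a u"
    using assms(1) by (simp add: hx_eq_bas hact_bas)
  have "scale a (\<rho> (0, 0, -1) u) = u"
    using shift[of "-1" 1] by (simp add: x lin.linear_scale[OF rho_linear[OF valid]] rho_unit)
  then have x_inv: "\<rho> (0, 0, -1) u = scale (inverse a) u"
    using assms(2) by (metis scale_one scale_scale left_inverse)
  show ?thesis
  proof (induction c rule: int_induct[where k = 0])
    case base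
    show ?case by (simp add: rho_unit)
  next
    case (step1 c)
    have "\<rho> (0, 0, c + 1) u = \<rho> (0, 0, c) (\<rho> (0, 0, 1) u)"
      by (simp add: shift)
    also have "\<dots> = scale (a powi (c + 1)) u"
      using step1 assms(2) by (simp add: x lin.linear_scale[OF rho_linear[OF valid]] power_int_add_1')
    finally show ?case .
  next
    case (step2 c)
    have "\<rho> (0, 0, c - 1) u = \<rho> (0, 0, c) (\<rho> (0, 0, -1) u)"
      by (simp add: shift)
    also have "\<dots> = scale (a powi (c - 1)) u"
      using step2 assms(2)
      by (simp add: x_inv lin.linear_scale[OF rho_linear[OF valid]] power_int_diff field_simps)
    finally show ?case .
  qed
qed

lemma rho_g_power:
  assumes "hact scale \<rho> (hg n w) u = scale a u" "b < n"
  shows "\<rho> (0, b, 0) u = scale (a ^ b) u"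
  using assms(2)
proof (induction b)
  case 0
  show ?case by (simp add: rho_unit)
next
  case (Suc b)
  then have n2: "n \<ge> 2" and valid: "validx n (0, b, 0)" "validx n (0, 1, 0)"
    by (simp_all add: validx_def)
  have "\<rho> (0, Suc b, 0) u = \<rho> (0, b, 0) (\<rho> (0, 1, 0) u)"
    by (rule rho_rho_bas[OF valid, symmetric]) (use Suc.prems in \<open>simp add: bmul_eq_bas\<close>)
  also have "\<dots> = scale (a ^ Suc b) u"
    using assms(1) Suc
    by (simp add: hg_eq_bas[OF n2] hact_bas lin.linear_scale[OF rho_linear[OF valid(1)]] mult.commute)
  finally show ?case .
qed

lemma rho_y_power: "a < n \<Longrightarrow> \<rho> (a, 0, 0) u = hact scale \<rho> (hpow n w \<gamma> (hy n w) a) u"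
proof (induction a)
  case 0
  show ?case by (simp add: hpow_0 hact_hone rho_unit)
next
  case (Suc a)
  then have n2: "n \<ge> 2" and valid: "validx n (1, 0, 0)" "validx n (a, 0, 0)"
    by (simp_all add: validx_def)
  have "\<rho> (Suc a, 0, 0) u = \<rho> (1, 0, 0) (\<rho> (a, 0, 0) u)"
    by (rule rho_rho_bas[OF valid, symmetric]) (use Suc.prems in \<open>simp add: bmul_eq_bas\<close>)
  also have "\<dots> = hact scale \<rho> (hy n w) (hact scale \<rho> (hpow n w \<gamma> (hy n w) a) u)"
    using Suc by (simp add: hy_eq_bas[OF n2] hact_bas)
  also have "\<dots> = hact scale \<rho> (hpow n w \<gamma> (hy n w) (Suc a)) u"
    by (simp add: hpow_Suc hact_hmul helem_hy helem_hpow[OF n_pos helem_hy])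
  finally show ?case .
qed

end

section \<open>The subspaces V(v,k) spanned by y^j.v\<close>

locale yd_standard_element = yetter_drinfeld scale n w \<gamma> \<rho> \<phi>
  for scale :: "'k::field \<Rightarrow> 'v::ab_group_add \<Rightarrow> 'v" and n w \<gamma> \<rho> \<phi> +
  fixes v :: 'v and \<alpha> \<beta> :: 'k and r i :: int
  assumes standard: "standard_element scale n w \<rho> \<phi> v \<alpha> \<beta> r i"
begin

abbreviation yv :: "nat \<Rightarrow> 'v" where
  "yv m \<equiv> hact scale \<rho> (hpow n w \<gamma> (hy n w) m) v"

abbreviation Vvk :: "nat \<Rightarrow> 'v set" where
  "Vvk k \<equiv> span {yv j | j. j \<le> k}"

lemma alpha_nonzero: "\<alpha> \<noteq> 0"
  and x_v: "hact scale \<rho> (hx n w) v = scale \<alpha> v"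
  and g_v: "hact scale \<rho> (hg n w) v = scale \<beta> v"
  and phi_v: "\<phi> j v = scale (mono n w 0 i r j) v"
  using standard unfolding standard_element_def by blast+

lemma yv_0: "yv 0 = v"
  by (simp add: hpow_0 hact_hone)

lemma yv_Suc: "yv (Suc m) = hact scale \<rho> (hy n w) (yv m)"
  by (simp add: hpow_Suc hact_hmul helem_hy helem_hpow[OF n_pos helem_hy])

lemma yv_in_Vvk: "j \<le> k \<Longrightarrow> yv j \<in> Vvk k"
  by (rule span_base) blast

lemma Vvk_mono: "j \<le> k \<Longrightarrow> Vvk j \<subseteq> Vvk k"
  by (intro span_mono) auto

lemma x_yv: "hact scale \<rho> (hx n w) (yv m) = scale \<alpha> (yv m)"
proof (induction m)
  case 0
  show ?case by (simp add: yv_0 x_v)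
next
  case (Suc m)
  have "hact scale \<rho> (hx n w) (hact scale \<rho> (hy n w) (yv m)) =
      scale 1 (hact scale \<rho> (hy n w) (hact scale \<rho> (hx n w) (yv m)))"
  proof (rule hact_commute[OF helem_hx helem_hy])
    fix p q u assume p: "p \<in> hsupp (hx n w :: bidx \<Rightarrow> 'k)" and q: "q \<in> hsupp (hy n w :: bidx \<Rightarrow> 'k)"
    obtain c where q_eq: "q = (1 mod n, 0, c)"
      using hsupp_hy[OF q] by (cases q) auto
    have "validx n q" "validx n (0, 0, 1)"
      using q helem_hy n_pos by (auto simp: helem_def validx_def)
    with p show "\<rho> p (\<rho> q u) = scale 1 (\<rho> q (\<rho> p u))"
      using rho_commute[of 0 0 1 "1 mod n" 0 c u] by (simp add: hx_eq_bas q_eq)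
  qed
  then show ?case
    using Suc by (simp add: yv_Suc lin.linear_scale[OF hact_linear[OF helem_hy]])
qed

lemma g_yv: "hact scale \<rho> (hg n w) (yv m) = scale (\<beta> * inverse \<gamma> ^ m) (yv m)"
proof (induction m)
  case 0
  show ?case by (simp add: yv_0 g_v)
next
  case (Suc m)
  have "hact scale \<rho> (hg n w) (hact scale \<rho> (hy n w) (yv m)) =
      scale (inverse \<gamma>) (hact scale \<rho> (hy n w) (hact scale \<rho> (hg n w) (yv m)))"
  proof (rule hact_commute[OF helem_hg helem_hy])
    fix p q u assume p: "p \<in> hsupp (hg n w :: bidx \<Rightarrow> 'k)" and q: "q \<in> hsupp (hy n w :: bidx \<Rightarrow> 'k)"
    obtain c where q_eq: "q = (1 mod n, 0, c)"
      using hsupp_hy[OF q] by (cases q) auto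
    have p_eq: "p = (0, nat (1 mod int n), int w * (1 div int n))"
      using p by (simp add: hg_eq_bas_mod)
    have "validx n p" "validx n q"
      using p q helem_hg helem_hy by (auto simp: helem_def)
    moreover have "inverse \<gamma> ^ (nat (1 mod int n) * (1 mod n)) = inverse \<gamma>"
    proof (cases "n = 1")
      case True
      with gamma_pow_n show ?thesis by simp
    next
      case False
      with n_pos show ?thesis by simp
    qed
    ultimately show "\<rho> p (\<rho> q u) = scale (inverse \<gamma>) (\<rho> q (\<rho> p u))"
      using rho_commute[of 0 "nat (1 mod int n)" "int w * (1 div int n)" "1 mod n" 0 c u]
      by (simp add: p_eq q_eq)
  qed
  then show ?case
    using Suc by (simp add: yv_Suc lin.linear_scale[OF hact_linear[OF helem_hy]] mult_ac)
qed

lemma rho_yv: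
  assumes "validx n (a, b, c)"
  shows "\<rho> (a, b, c) (yv m) = scale (\<alpha> powi c * (\<beta> * inverse \<gamma> ^ m) ^ b) (yv (m + a))"
proof -
  have a: "a < n" and b: "b < n"
    using assms by (simp_all add: validx_def)
  have valid: "validx n (a, 0, 0)" "validx n (0, b, c)" "validx n (0, b, 0)" "validx n (0, 0, c)"
    using a b n_pos by (simp_all add: validx_def)
  have "\<rho> (a, b, c) (yv m) = \<rho> (a, 0, 0) (\<rho> (0, b, c) (yv m))"
    by (rule rho_rho_bas[OF valid(1,2), symmetric]) (use a b in \<open>simp add: bmul_eq_bas\<close>)
  also have "\<dots> = \<rho> (a, 0, 0) (\<rho> (0, b, 0) (\<rho> (0, 0, c) (yv m)))"
    using rho_rho_bas[OF valid(3,4)] b n_pos by (simp add: bmul_eq_bas)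
  also have "\<dots> = scale (\<alpha> powi c * (\<beta> * inverse \<gamma> ^ m) ^ b) (\<rho> (a, 0, 0) (yv m))"
    by (simp add: rho_x_power[OF x_yv alpha_nonzero] rho_g_power[OF g_yv b]
        lin.linear_scale[OF rho_linear[OF valid(1)]] lin.linear_scale[OF rho_linear[OF valid(3)]])
  also have "\<rho> (a, 0, 0) (yv m) = yv (m + a)"
    by (simp add: rho_y_power[OF a] hact_hpow_hpow[OF helem_hy] add.commute)
  finally show ?thesis .
qed

lemma rho_Vvk:
  assumes "validx n q" "x \<in> Vvk j"
  shows "\<rho> q x \<in> Vvk (j + fst q)"
proof (rule linear_image_span_subset[OF rho_linear[OF assms(1)] _ assms(2)])
  show "\<rho> q ` {yv i | i. i \<le> j} \<subseteq> Vvk (j + fst q)"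
  proof (rule image_subsetI)
    fix x assume "x \<in> {yv i | i. i \<le> j}"
    then obtain i where x: "x = yv i" "i \<le> j" by blast
    obtain a b c where q: "q = (a, b, c)" by (cases q)
    have "yv (i + a) \<in> Vvk (j + fst q)"
      using x(2) by (intro yv_in_Vvk) (simp add: q)
    then show "\<rho> q x \<in> Vvk (j + fst q)"
      using assms(1) by (simp add: x(1) q rho_yv span_scale)
  qed
qed

lemma phi_yv: "\<phi> t (yv j) \<in> Vvk j"
proof (induction j arbitrary: t)
  case 0
  have "v \<in> Vvk 0"
    using yv_in_Vvk[of 0 0] by (simp add: yv_0)
  then show ?case by (simp add: phi_v span_scale yv_0)
next
  case (Suc j)
  have summand: "\<phi> t (\<rho> l (yv j)) \<in> Vvk (Suc j)" if l: "l \<in> hsupp (hy n w :: bidx \<Rightarrow> 'k)" for l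
  proof -
    have "validx n l" "fst l \<le> 1"
      using l helem_hy hsupp_hy[OF l] by (auto simp: helem_def)
    have "{\<rho> q (\<phi> s (yv j)) | q s. validx n q \<and> fst q \<le> fst l} \<subseteq> Vvk (Suc j)"
    proof clarify
      fix q s assume q: "validx n q" "fst q \<le> fst l"
      have "\<rho> q (\<phi> s (yv j)) \<in> Vvk (j + fst q)"
        by (rule rho_Vvk[OF q(1) Suc.IH])
      moreover have "Vvk (j + fst q) \<subseteq> Vvk (Suc j)"
        using q(2) \<open>fst l \<le> 1\<close> by (intro Vvk_mono) simp
      ultimately show "\<rho> q (\<phi> s (yv j)) \<in> Vvk (Suc j)" by blast
    qed
    with phi_rho_in_span[OF \<open>validx n l\<close>] show ?thesis
      by (meson span_minimal subspace_span subsetD)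
  qed
  show ?case
    unfolding yv_Suc hact_def[of scale \<rho> "hy n w"] lin.linear_sum[OF phi_linear]
      lin.linear_scale[OF phi_linear]
    by (intro span_sum span_scale summand)
qed

lemma subcomodule_Vvk: "subcomodule scale \<phi> (Vvk k)"
  unfolding subcomodule_def
proof (intro conjI allI ballI subspace_span)
  fix t x assume "x \<in> Vvk k"
  moreover have "\<phi> t ` {yv j | j. j \<le> k} \<subseteq> Vvk k"
  proof (rule image_subsetI)
    fix y assume "y \<in> {yv j | j. j \<le> k}"
    then obtain j where "y = yv j" "j \<le> k" by blast
    then show "\<phi> t y \<in> Vvk k"
      using phi_yv Vvk_mono by blast
  qed
  ultimately show "\<phi> t x \<in> Vvk k"
    by (rule linear_image_span_subset[OF phi_linear, rotated -1])
qed

lemma yv_in_Vvk_if_closed: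
  assumes "yv (Suc k) \<in> Vvk k"
  shows "yv m \<in> Vvk k"
proof -
  have "hact scale \<rho> (hy n w) ` {yv j | j. j \<le> k} \<subseteq> Vvk k"
  proof (rule image_subsetI)
    fix y assume "y \<in> {yv j | j. j \<le> k}"
    then obtain j where "y = yv j" "j \<le> k" by blast
    then show "hact scale \<rho> (hy n w) y \<in> Vvk k"
      using assms by (cases "j = k") (simp_all add: yv_Suc[symmetric] yv_in_Vvk)
  qed
  then have "x \<in> Vvk k \<Longrightarrow> hact scale \<rho> (hy n w) x \<in> Vvk k" for x
    by (rule linear_image_span_subset[OF hact_linear[OF helem_hy]])
  then show ?thesis
    by (induction m) (simp_all add: yv_in_Vvk[of 0 k, simplified] yv_Suc)
qed

lemma yd_submodule_Vvk:
  assumes "yv (Suc k) \<in> Vvk k"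
  shows "yd_submodule scale n \<rho> \<phi> (Vvk k)"
proof -
  have "Vvk m \<subseteq> Vvk k" for m
    using yv_in_Vvk_if_closed[OF assms] by (intro span_minimal) auto
  with rho_Vvk have "\<rho> q x \<in> Vvk k" if "validx n q" "x \<in> Vvk k" for q x
    using that by blast
  with subcomodule_Vvk show ?thesis
    unfolding yd_submodule_def by blast
qed

end

theorem proposition3p4:
  fixes scale :: "'k::field_char_0 \<Rightarrow> 'v::ab_group_add \<Rightarrow> 'v"
    and n w :: nat and \<gamma> :: 'k
    and \<rho> \<phi> :: "bidx \<Rightarrow> 'v \<Rightarrow> 'v"
    and v :: 'v and \<alpha> \<beta> :: 'k and r i :: int
  assumes alg_closed: "\<forall>p :: 'k poly. degree p \<ge> 1 \<longrightarrow> (\<exists>z. poly p z = 0)"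
    and n_pos: "n > 0" and w_pos: "w > 0"
    and prim: "\<gamma> ^ n = 1" "\<forall>m. 0 < m \<and> m < n \<longrightarrow> \<gamma> ^ m \<noteq> 1"
    and vs: "vector_space scale"
    and yd: "yd_module scale n w \<gamma> \<rho> \<phi>"
    and std: "standard_element scale n w \<rho> \<phi> v \<alpha> \<beta> r i"
  shows "\<forall>k::nat.
     hact scale \<rho> (hx n w) (hact scale \<rho> (hpow n w \<gamma> (hy n w) k) v)
        = scale \<alpha> (hact scale \<rho> (hpow n w \<gamma> (hy n w) k) v) \<and>
     hact scale \<rho> (hg n w) (hact scale \<rho> (hpow n w \<gamma> (hy n w) k) v)
        = scale (\<beta> * inverse \<gamma> ^ k) (hact scale \<rho> (hpow n w \<gamma> (hy n w) k) v) \<and>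
     subcomodule scale \<phi>
        (module.span scale {hact scale \<rho> (hpow n w \<gamma> (hy n w) j) v | j. j \<le> k}) \<and>
     (hact scale \<rho> (hpow n w \<gamma> (hy n w) (Suc k)) v
          \<in> module.span scale {hact scale \<rho> (hpow n w \<gamma> (hy n w) j) v | j. j \<le> k}
        \<longrightarrow> yd_submodule scale n \<rho> \<phi>
              (module.span scale {hact scale \<rho> (hpow n w \<gamma> (hy n w) j) v | j. j \<le> k}))"
proof -
  interpret yd_standard_element scale n w \<gamma> \<rho> \<phi> v \<alpha> \<beta> r i
    using vs n_pos prim(1) yd std
    by (intro yd_standard_element.intro yetter_drinfeld.intro yetter_drinfeld_axioms.intro
        yd_standard_element_axioms.intro)
  show ?thesis
    using x_yv g_yv subcomodule_Vvk yd_submodule_Vvk by blast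
qed

end
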